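(* Let $n\ge 2$ and let $P=[p_1,\ldots,p_n]\neq[n,n-1,\ldots,1]$ be an arithmetically progressed permutation with ratio $k$ such that $p_1\in\{1,k+1,n\}$. Then there exists a string $\mathsf{T}$ of length $n$ over the binary alphabet $\{\mathtt{a},\mathtt{b}\}$ ($\mathtt{a}<\mathtt{b}$) with $\mathsf{SA}_{\mathsf{T}}=P$.
   Context: Lexicographic order with a proper prefix smaller than the longer string; suffix array $\mathsf{SA}_{\mathsf{T}}$: permutation of $[1..n]$ such that $\mathsf{T}[\mathsf{SA}_{\mathsf{T}}[i]..n]$ is the $i$-th smallest suffix. $x\bmod n$ denotes the representative of $x$ modulo $n$ in $[1..n]$. An arithmetically progressed permutation of length $n$ with ratio $k\in[1..n-1]$ is a permutation $P=[p_1,\ldots,p_n]$ of $[1..n]$ with $p_{i+1}=p_i+k\bmod n$. *)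

theory Defs
  imports Main
begin

datatype ab = a | b

instantiation ab :: linorder
begin
fun less_eq_ab :: "ab \<Rightarrow> ab \<Rightarrow> bool" where
  "less_eq_ab a _ = True"
| "less_eq_ab b y = (y = b)"
definition less_ab :: "ab \<Rightarrow> ab \<Rightarrow> bool" where
  "less_ab x y = (x \<le> y \<and> x \<noteq> y)"
instance proof
  fix x y z :: ab
  show "x \<le> x" by (cases x) auto
  show "x \<le> y \<or> y \<le> x" by (cases x; cases y) auto
  show "x < y \<longleftrightarrow> x \<le> y \<and> \<not> y \<le> x" by (cases x; cases y) (auto simp: less_ab_def)
  show "x \<le> y \<Longrightarrow> y \<le> z \<Longrightarrow> x \<le> z" by (cases x; cases y; cases z) auto
  show "x \<le> y \<Longrightarrow> y \<le> x \<Longrightarrow> x = y" by (cases x; cases y) auto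
qed
end

text \<open>Lexicographic order on strings; a proper prefix is smaller (library lexord).\<close>
definition str_less :: "'c::linorder list \<Rightarrow> 'c list \<Rightarrow> bool" where
  "str_less xs ys \<longleftrightarrow> (xs, ys) \<in> lexord {(x, y). x < y}"

text \<open>Suffix T[i..n], 1-indexed.\<close>
definition suffix_at :: "'c list \<Rightarrow> nat \<Rightarrow> 'c list" where
  "suffix_at T i = drop (i - 1) T"

definition is_suffix_array :: "'c::linorder list \<Rightarrow> nat list \<Rightarrow> bool" where
  "is_suffix_array T P \<longleftrightarrow>
     length P = length T \<and> set P = {1..length T} \<and>
     (\<forall>i. i + 1 < length P \<longrightarrow> str_less (suffix_at T (P ! i)) (suffix_at T (P ! (i + 1))))"

definition modr :: "nat \<Rightarrow> nat \<Rightarrow> nat" where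
  "modr x n = (if x mod n = 0 then n else x mod n)"

definition arith_prog_perm :: "nat \<Rightarrow> nat \<Rightarrow> nat list \<Rightarrow> bool" where
  "arith_prog_perm n k P \<longleftrightarrow>
     1 \<le> k \<and> k \<le> n - 1 \<and> length P = n \<and> set P = {1..n} \<and>
     (\<forall>i. i + 1 < n \<longrightarrow> P ! (i + 1) = modr (P ! i + k) n)"

end

theory Submission
  imports Defs
begin

text \<open>Two local conditions on neighbouring entries certify a suffix array: the first
  letters of the suffixes T[P_j..n] are non-decreasing in j, and on a tie either P_j = n (a
  one-letter suffix is a proper prefix of the next one) or P_j + 1 has smaller rank than
  P_(j+1) + 1, so that the remaining suffixes are already in order. Putting the letter a at the
  positions P_1, ..., P_m and b elsewhere meets the first condition for every boundary m and
  leaves ties only at indices other than m. In an arithmetically progressed permutation the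
  successor of x is x + k mod n, which commutes with adding 1 unless it wraps to n; hence the
  ranks of P_j + 1 increase along P except where P_(j+1) = n or P_j + 1 = p_n, and the
  hypothesis on p_1 lets a single boundary m cover both exceptions.\<close>

definition rank :: "nat list \<Rightarrow> nat \<Rightarrow> nat" where
  "rank P x = (THE j. j < length P \<and> P ! j = x)"

lemma rank_nth: "distinct P \<Longrightarrow> j < length P \<Longrightarrow> rank P (P ! j) = j"
  unfolding rank_def by (auto intro!: the_equality simp: nth_eq_iff_index_eq)

lemma rank_less_length_and_nth_rank:
  assumes "distinct P" "x \<in> set P"
  shows "rank P x < length P \<and> P ! rank P x = x"
proof -
  obtain j where "j < length P" "P ! j = x" using assms(2) by (metis in_set_conv_nth)
  then show ?thesis using rank_nth[OF assms(1)] by auto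
qed

lemma distinct_if_set_eq_atLeastAtMost:
  "length P = n \<Longrightarrow> set P = {1..n} \<Longrightarrow> distinct P"
  by (metis card_atLeastAtMost card_distinct diff_Suc_1)

context
  fixes T :: "'c::linorder list" and P :: "nat list" and n :: nat
  assumes length_T: "length T = n" and length_P: "length P = n"
    and set_P: "set P = {1..n}"
    and first_letters_mono: "\<And>j. j + 1 < n \<Longrightarrow> T ! (P ! j - 1) \<le> T ! (P ! (j + 1) - 1)"
    and tie_by_rank: "\<And>j. j + 1 < n \<Longrightarrow> T ! (P ! j - 1) = T ! (P ! (j + 1) - 1) \<Longrightarrow>
       P ! j = n \<or> (P ! (j + 1) \<noteq> n \<and> rank P (P ! j + 1) < rank P (P ! (j + 1) + 1))"
begin

private lemma nth_P_in: "j < n \<Longrightarrow> P ! j \<in> {1..n}"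
  using set_P length_P nth_mem by blast

private lemma rank_P_nth: "j < n \<Longrightarrow> rank P (P ! j) = j"
  using rank_nth distinct_if_set_eq_atLeastAtMost[OF length_P set_P] length_P by simp

private lemma first_letters_mono_trans:
  "i \<le> i' \<Longrightarrow> i' < n \<Longrightarrow> T ! (P ! i - 1) \<le> T ! (P ! i' - 1)"
proof (induction i' rule: dec_induct)
  case (step m)
  then show ?case using first_letters_mono[of m] by (auto intro: order_trans)
qed simp

private lemma first_letters_constant_between:
  "i \<le> j \<Longrightarrow> j \<le> i' \<Longrightarrow> i' < n \<Longrightarrow> T ! (P ! i - 1) = T ! (P ! i' - 1) \<Longrightarrow>
   T ! (P ! j - 1) = T ! (P ! i - 1)"
  using first_letters_mono_trans[of i j] first_letters_mono_trans[of j i'] by (simp add: antisym)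

private lemma rank_increases_on_tie:
  assumes "i < i'" "i' < n" "T ! (P ! i - 1) = T ! (P ! i' - 1)" "P ! i \<noteq> n"
  shows "i < j \<Longrightarrow> j \<le> i' \<Longrightarrow> P ! j \<noteq> n \<and> rank P (P ! i + 1) < rank P (P ! j + 1)"
proof (induction j rule: less_induct)
  case (less j)
  then obtain j0 where j0: "j = Suc j0" "i \<le> j0" by (cases j) auto
  have "T ! (P ! j0 - 1) = T ! (P ! j - 1)"
    using first_letters_constant_between[of i j0 i'] first_letters_constant_between[of i j i']
      assms j0 less.prems by simp
  then have tie: "P ! j0 = n \<or> (P ! j \<noteq> n \<and> rank P (P ! j0 + 1) < rank P (P ! j + 1))"
    using tie_by_rank[of j0] j0 less.prems assms by simp
  show ?case
  proof (cases "j0 = i")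
    case False
    then show ?thesis using less.IH[of j0] less.prems j0 tie by auto
  qed (use tie assms in simp)
qed

private lemma drop_pred_nth_P:
  assumes "j < n"
  shows "drop (P ! j - 1) T = T ! (P ! j - 1) # drop (P ! j) T"
proof -
  have "P ! j - 1 < length T" "Suc (P ! j - 1) = P ! j" using nth_P_in[OF assms] length_T by auto
  then show ?thesis using Cons_nth_drop_Suc[of "P ! j - 1" T] by simp
qed

private lemma suffixes_sorted:
  "i < i' \<Longrightarrow> i' < n \<Longrightarrow> str_less (drop (P ! i - 1) T) (drop (P ! i' - 1) T)"
proof (induction "n - P ! i" arbitrary: i i' rule: less_induct)
  case less
  have in_range: "P ! i \<in> {1..n}" "P ! i' \<in> {1..n}" using nth_P_in less.prems by auto
  note drops = drop_pred_nth_P[of i] drop_pred_nth_P[of i']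
  show ?case
  proof (cases "T ! (P ! i - 1) = T ! (P ! i' - 1)")
    case False
    then show ?thesis
      using first_letters_mono_trans[of i i'] less.prems drops unfolding str_less_def by simp
  next
    case tie: True
    show ?thesis
    proof (cases "P ! i = n")
      case True
      have "P ! i \<noteq> P ! i'" using rank_P_nth[of i] rank_P_nth[of i'] less.prems by auto
      then have "drop (P ! i') T \<noteq> []" using True in_range length_T by auto
      then show ?thesis using True length_T tie drops less.prems unfolding str_less_def
        by (cases "drop (P ! i') T") simp_all
    next
      case False
      have ranks: "P ! i' \<noteq> n \<and> rank P (P ! i + 1) < rank P (P ! i' + 1)"
        using rank_increases_on_tie[of i i' i'] less.prems tie False by simp
      then have "P ! i + 1 \<in> set P" "P ! i' + 1 \<in> set P" using in_range False set_P by auto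
      then obtain u u' where u: "u < n" "P ! u = P ! i + 1" "u' < n" "P ! u' = P ! i' + 1"
        using length_P by (metis in_set_conv_nth)
      have "u < u'" using ranks u rank_P_nth[of u] rank_P_nth[of u'] by simp
      moreover have "n - P ! u < n - P ! i" using u in_range False by auto
      ultimately have "str_less (drop (P ! u - 1) T) (drop (P ! u' - 1) T)"
        using less.hyps u by blast
      then show ?thesis using u tie drops less.prems unfolding str_less_def by simp
    qed
  qed
qed

lemma is_suffix_array_if_first_letters_and_ranks: "is_suffix_array T P"
  unfolding is_suffix_array_def suffix_at_def
  using length_T length_P set_P suffixes_sorted by simp

end

lemma is_suffix_array_two_blocks:
  assumes length_P: "length P = n" and set_P: "set P = {1..n}"
    and rank_step: "\<And>j. j + 1 < n \<Longrightarrow> j + 1 \<noteq> m \<Longrightarrow> P ! j \<noteq> n \<Longrightarrow>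
       P ! (j + 1) \<noteq> n \<and> rank P (P ! j + 1) < rank P (P ! (j + 1) + 1)"
  shows "is_suffix_array (map (\<lambda>x. if rank P (Suc x) < m then a else b) [0..<n]) P"
    (is "is_suffix_array ?T P")
proof -
  have letter: "?T ! (P ! j - 1) = (if j < m then a else b)" if "j < n" for j
  proof -
    have "P ! j \<in> {1..n}" using that set_P length_P nth_mem by blast
    then show ?thesis
      using rank_nth[OF distinct_if_set_eq_atLeastAtMost[OF length_P set_P]] that length_P
      by auto
  qed
  show ?thesis
  proof (rule is_suffix_array_if_first_letters_and_ranks)
    show "?T ! (P ! j - 1) \<le> ?T ! (P ! (j + 1) - 1)" if "j + 1 < n" for j
      using letter[of j] letter[of "j + 1"] that by auto
    show "P ! j = n \<or> (P ! (j + 1) \<noteq> n \<and> rank P (P ! j + 1) < rank P (P ! (j + 1) + 1))"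
      if "j + 1 < n" "?T ! (P ! j - 1) = ?T ! (P ! (j + 1) - 1)" for j
    proof -
      have "j + 1 \<noteq> m" using letter[of j] letter[of "j + 1"] that by (auto split: if_splits)
      then show ?thesis using rank_step that(1) by blast
    qed
  qed (use length_P set_P in simp_all)
qed

definition ap_succ :: "nat \<Rightarrow> nat \<Rightarrow> nat \<Rightarrow> nat" where
  "ap_succ n k x = (if x + k \<le> n then x + k else x + k - n)"

lemma modr_add_eq_ap_succ:
  assumes "x \<in> {1..n}" "k < n"
  shows "modr (x + k) n = ap_succ n k x"
proof -
  have "x \<le> n" using assms(1) by simp
  then consider "x + k < n" | "x + k = n" | "n < x + k" "x + k < 2 * n" using assms(2) by linarith
  then show ?thesis
  proof cases
    case 3
    then have "(x + k) mod n = x + k - n" by (simp add: le_mod_geq)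
    then show ?thesis using 3 unfolding modr_def ap_succ_def by auto
  qed (use assms in \<open>auto simp: modr_def ap_succ_def\<close>)
qed

lemma ap_succ_in_range: "x \<in> {1..n} \<Longrightarrow> k < n \<Longrightarrow> ap_succ n k x \<in> {1..n}"
  by (auto simp: ap_succ_def)

lemma ap_succ_inj:
  "x \<in> {1..n} \<Longrightarrow> y \<in> {1..n} \<Longrightarrow> k < n \<Longrightarrow> ap_succ n k x = ap_succ n k y \<Longrightarrow> x = y"
  by (auto simp: ap_succ_def split: if_splits)

lemma ap_succ_Suc: "x + 1 \<le> n \<Longrightarrow> ap_succ n k x \<noteq> n \<Longrightarrow> ap_succ n k (x + 1) = ap_succ n k x + 1"
  by (auto simp: ap_succ_def)

context
  fixes n k :: nat and P :: "nat list"
  assumes ap: "arith_prog_perm n k P"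
begin

private lemma k_bounds: "1 \<le> k" "k < n"
  using ap unfolding arith_prog_perm_def by auto

private lemma ap_length: "length P = n" and ap_set: "set P = {1..n}"
  using ap unfolding arith_prog_perm_def by auto

private lemma ap_distinct: "distinct P"
  using distinct_if_set_eq_atLeastAtMost[OF ap_length ap_set] .

private lemma ap_nth_in: "j < n \<Longrightarrow> P ! j \<in> {1..n}"
  using ap_set ap_length nth_mem by blast

private lemma ap_rank_nth: "j < n \<Longrightarrow> rank P (P ! j) = j"
  using rank_nth[OF ap_distinct] ap_length by simp

lemma arith_prog_perm_nth_Suc: "i + 1 < n \<Longrightarrow> P ! (i + 1) = ap_succ n k (P ! i)"
  using ap ap_nth_in[of i] modr_add_eq_ap_succ k_bounds unfolding arith_prog_perm_def by simp

lemma arith_prog_perm_wrap: "ap_succ n k (P ! (n - 1)) = P ! 0"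
proof -
  have last_in: "P ! (n - 1) \<in> {1..n}" using ap_nth_in k_bounds by simp
  then have "ap_succ n k (P ! (n - 1)) \<in> set P" using ap_succ_in_range k_bounds ap_set by simp
  then obtain i where i: "i < n" "P ! i = ap_succ n k (P ! (n - 1))"
    using ap_length by (metis in_set_conv_nth)
  show ?thesis
  proof (cases i)
    case (Suc i0)
    then have "ap_succ n k (P ! i0) = ap_succ n k (P ! (n - 1))"
      using i arith_prog_perm_nth_Suc[of i0] by simp
    moreover have "P ! i0 \<in> {1..n}" using ap_nth_in Suc i by simp
    ultimately have "P ! i0 = P ! (n - 1)"
      using ap_succ_inj last_in k_bounds by blast
    then have "i0 = n - 1" using ap_distinct ap_length Suc i by (simp add: nth_eq_iff_index_eq)
    then show ?thesis using Suc i by simp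
  qed (use i in simp)
qed

lemma arith_prog_perm_decreasing: "P ! 0 = n \<Longrightarrow> k = n - 1 \<Longrightarrow> P = rev [1..<n + 1]"
proof (rule nth_equalityI)
  assume start: "P ! 0 = n" and ratio: "k = n - 1"
  have "P ! j = n - j" if "j < n" for j
    using that
  proof (induction j)
    case (Suc j)
    then show ?case using arith_prog_perm_nth_Suc[of j] start ratio by (simp add: ap_succ_def)
  qed (use start in simp)
  then show "P ! j = rev [1..<n + 1] ! j" if "j < length P" for j
    using that ap_length by (simp add: rev_nth del: upt_Suc)
qed (simp add: ap_length)

text \<open>By ap_succ_Suc the entry of P after P ! j + 1 is P ! (j + 1) + 1; the hypotheses
  exclude the two wrap-arounds.\<close>

lemma rank_Suc_nth_Suc:
  assumes "j + 1 < n" "P ! (j + 1) \<noteq> n" "P ! j + 1 \<noteq> P ! (n - 1)" "P ! j \<noteq> n"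
  shows "rank P (P ! (j + 1) + 1) = rank P (P ! j + 1) + 1"
proof -
  let ?i = "rank P (P ! j + 1)"
  have "P ! j + 1 \<in> set P" using ap_nth_in[of j] assms ap_set by auto
  then have i: "?i < n" "P ! ?i = P ! j + 1"
    using rank_less_length_and_nth_rank[OF ap_distinct] ap_length by auto
  then have "?i \<noteq> n - 1" using assms(3) by auto
  then have "P ! (?i + 1) = P ! (j + 1) + 1"
    using arith_prog_perm_nth_Suc[of ?i] arith_prog_perm_nth_Suc[of j] ap_succ_Suc i assms
      ap_nth_in[of j] by auto
  then show ?thesis using ap_rank_nth[of "?i + 1"] \<open>?i \<noteq> n - 1\<close> i by simp
qed

text \<open>For each admissible first entry a single index m meets both wrap-around
  exceptions: m is the rank of n when P_1 is 1 or k + 1, and the rank of n - 1 when P_1 = n.\<close>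

lemma arith_prog_perm_boundary:
  assumes "P \<noteq> rev [1..<n + 1]" "P ! 0 \<in> {1, k + 1, n}"
  shows "\<exists>m. \<forall>j. j + 1 < n \<longrightarrow> j + 1 \<noteq> m \<longrightarrow> P ! j \<noteq> n \<longrightarrow>
           P ! (j + 1) \<noteq> n \<and> P ! j + 1 \<noteq> P ! (n - 1)"
proof -
  have wrap: "ap_succ n k (P ! (n - 1)) = P ! 0" by (rule arith_prog_perm_wrap)
  have last_in: "P ! (n - 1) \<in> {1..n}" using ap_nth_in k_bounds by simp
  have not_n_before_rank_n: "P ! (j + 1) \<noteq> n" if "j + 1 < n" "j + 1 \<noteq> rank P n" for j
    using that ap_rank_nth[of "j + 1"] by auto
  have "P ! 0 = 1 \<or> P ! 0 = k + 1 \<or> P ! 0 = n" using assms(2) by simp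
  moreover have "k \<noteq> n - 1" if "P ! 0 = n"
    using that assms(1) arith_prog_perm_decreasing by blast
  ultimately consider "P ! 0 = 1" | "P ! 0 = k + 1" "k + 1 < n" | "P ! 0 = n" "k + 1 < n"
    using k_bounds by linarith
  then show ?thesis
  proof cases
    case 1
    then have last: "P ! (n - 1) = n - k + 1"
      using wrap last_in k_bounds by (auto simp: ap_succ_def split: if_splits)
    show ?thesis
    proof (intro exI[of _ "rank P n"] allI impI conjI)
      fix j assume j: "j + 1 < n" "j + 1 \<noteq> rank P n" "P ! j \<noteq> n"
      show not_n: "P ! (j + 1) \<noteq> n" using not_n_before_rank_n j by simp
      show "P ! j + 1 \<noteq> P ! (n - 1)"
      proof
        assume "P ! j + 1 = P ! (n - 1)"
        then have "P ! (j + 1) = n" using arith_prog_perm_nth_Suc[of j] j last k_bounds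
          by (simp add: ap_succ_def)
        then show False using not_n by simp
      qed
    qed
  next
    case 2
    then have "P ! (n - 1) = 1"
      using wrap last_in k_bounds by (auto simp: ap_succ_def split: if_splits)
    moreover have "P ! j + 1 \<noteq> 1" if "j < n" for j using ap_nth_in[OF that] by simp
    ultimately show ?thesis using not_n_before_rank_n by (intro exI[of _ "rank P n"]) simp
  next
    case 3
    then have last: "P ! (n - 1) = n - k"
      using wrap last_in k_bounds by (auto simp: ap_succ_def split: if_splits)
    show ?thesis
    proof (intro exI[of _ "rank P (n - 1)"] allI impI conjI)
      fix j assume j: "j + 1 < n" "j + 1 \<noteq> rank P (n - 1)" "P ! j \<noteq> n"
      show "P ! (j + 1) \<noteq> n" using j 3 ap_rank_nth[of "j + 1"] ap_rank_nth[of 0] by auto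
      show "P ! j + 1 \<noteq> P ! (n - 1)"
      proof
        assume "P ! j + 1 = P ! (n - 1)"
        then have "P ! (j + 1) = n - 1" using arith_prog_perm_nth_Suc[of j] j last 3
          by (auto simp: ap_succ_def)
        then show False using j ap_rank_nth[of "j + 1"] by simp
      qed
    qed
  qed
qed

end

theorem theorem9:
  fixes n k :: nat and P :: "nat list"
  assumes "n \<ge> 2"
    and "arith_prog_perm n k P"
    and "P \<noteq> rev [1..<n+1]"
    and "P ! 0 \<in> {1, k + 1, n}"
  shows "\<exists>T :: ab list. length T = n \<and> is_suffix_array T P"
proof -
  have length_P: "length P = n" and set_P: "set P = {1..n}"
    using assms(2) unfolding arith_prog_perm_def by auto
  obtain m where m: "\<And>j. j + 1 < n \<Longrightarrow> j + 1 \<noteq> m \<Longrightarrow> P ! j \<noteq> n \<Longrightarrow>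
      P ! (j + 1) \<noteq> n \<and> P ! j + 1 \<noteq> P ! (n - 1)"
    using arith_prog_perm_boundary[OF assms(2-4)] by blast
  have "is_suffix_array (map (\<lambda>x. if rank P (Suc x) < m then a else b) [0..<n]) P"
  proof (rule is_suffix_array_two_blocks[OF length_P set_P])
    fix j assume "j + 1 < n" "j + 1 \<noteq> m" "P ! j \<noteq> n"
    then show "P ! (j + 1) \<noteq> n \<and> rank P (P ! j + 1) < rank P (P ! (j + 1) + 1)"
      using m rank_Suc_nth_Suc[OF assms(2)] by simp
  qed
  then show ?thesis by (intro exI[of _ "map _ [0..<n]"]) simp
qed

end
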